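(* Let $X$ be a dendric shift over $\mathcal{A}_3=\{1,2,3\}$ and let $Y$ be the image of $X$ under a morphism $\sigma\in\mathcal{S}_3$. Then $Y$ is dendric if and only if $\sigma\in\mathrm{DP}(X)$.
   Context: A shift space over $\mathcal{A}$ is a closed shift-invariant $X\subseteq\mathcal{A}^{\mathbb{Z}}$ in which all letters occur, with factor set $\mathcal{L}(X)$. For $w\in\mathcal{L}(X)$, $\mathcal{E}_X(w)$ is the bipartite graph with left vertices $\{a:aw\in\mathcal{L}(X)\}$, right vertices $\{b:wb\in\mathcal{L}(X)\}$, edges $\{a,b\}$ for $awb\in\mathcal{L}(X)$; $w$ is bispecial if it has at least two left and two right vertices, dendric if $\mathcal{E}_X(w)$ is a tree; $X$ is dendric if all its factors are dendric. $\mathcal{S}_3=\{\alpha,\beta,\gamma,\eta\}\cup\{\delta^{(k)},\zeta^{(k)}:k\ge1\}$ with $\alpha:1\mapsto1,2\mapsto12,3\mapsto13$; $\beta:1\mapsto1,2\mapsto12,3\mapsto132$; $\gamma:1\mapsto1,2\mapsto12,3\mapsto123$; $\delta^{(k)}:1\mapsto1,2\mapsto123^k,3\mapsto123^{k+1}$; $\zeta^{(k)}:1\mapsto13^k,2\mapsto12,3\mapsto13^{k+1}$; $\eta:1\mapsto13,2\mapsto12,3\mapsto123$. The image of $X$ under $\sigma$ is $Y=\{S^k\sigma(x):x\in X,0\le k<|\sigma(x_0)|\}$. For non-empty $u\in\mathcal{L}(Y)$ containing $1$ there is a unique triple $(s,v,p)$, $v\in\mathcal{L}(X)$, $u=s\sigma(v)p$,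 with $s$ a proper suffix of $\sigma(a)$ and $p$ a non-empty prefix of $\sigma(b)$ for some $a,b$ with $avb\in\mathcal{L}(X)$; $u$ is an extended image of $v$. $\mathrm{DP}(X)$ is the set of $\sigma\in\mathcal{S}_3$ such that for every $v\in\mathcal{L}(X)$, every bispecial extended image of $v$ under $\sigma$ is dendric in $Y$. *)

theory Defs
  imports "HOL-Analysis.Analysis" "HOL-Library.Sublist"
begin

text \<open>Letters are natural numbers; the alphabet A3 is {1,2,3}. Bi-infinite
sequences are functions int => nat, with the product (pointwise) topology
where nat carries its (discrete) standard topology.\<close>

definition A3 :: "nat set" where "A3 = {1, 2, 3}"

definition shift :: "(int \<Rightarrow> nat) \<Rightarrow> (int \<Rightarrow> nat)" where
  "shift x = (\<lambda>n. x (n + 1))"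

definition shift_space :: "nat set \<Rightarrow> (int \<Rightarrow> nat) set \<Rightarrow> bool" where
  "shift_space A X \<longleftrightarrow>
     X \<subseteq> {x. \<forall>n. x n \<in> A} \<and> closed X \<and> shift ` X = X \<and>
     (\<forall>a\<in>A. \<exists>x\<in>X. \<exists>n. x n = a)"

text \<open>Factor set (language) of a set of bi-infinite sequences (includes the empty word).\<close>
definition lang :: "(int \<Rightarrow> nat) set \<Rightarrow> nat list set" where
  "lang X = {w. \<exists>x\<in>X. \<exists>i::int. w = map (\<lambda>j. x (i + int j)) [0..<length w]}"

definition left_ext :: "(int \<Rightarrow> nat) set \<Rightarrow> nat list \<Rightarrow> nat set" where
  "left_ext X w = {a. a # w \<in> lang X}"

definition right_ext :: "(int \<Rightarrow> nat) set \<Rightarrow> nat list \<Rightarrow> nat set" where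
  "right_ext X w = {b. w @ [b] \<in> lang X}"

text \<open>Vertices of the bipartite extension graph: left copies Inl a, right copies Inr b.\<close>
definition ext_vertices :: "(int \<Rightarrow> nat) set \<Rightarrow> nat list \<Rightarrow> (nat + nat) set" where
  "ext_vertices X w = Inl ` left_ext X w \<union> Inr ` right_ext X w"

definition ext_edges :: "(int \<Rightarrow> nat) set \<Rightarrow> nat list \<Rightarrow> ((nat + nat) \<times> (nat + nat)) set" where
  "ext_edges X w = {(Inl a, Inr b) | a b. [a] @ w @ [b] \<in> lang X}
                 \<union> {(Inr b, Inl a) | a b. [a] @ w @ [b] \<in> lang X}"

text \<open>Simple undirected graph given by vertex set V and symmetric adjacency E.\<close>
definition graph_connected :: "'v set \<Rightarrow> ('v \<times> 'v) set \<Rightarrow> bool" where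
  "graph_connected V E \<longleftrightarrow> V \<noteq> {} \<and> (\<forall>u\<in>V. \<forall>v\<in>V. (u, v) \<in> (E \<inter> (V \<times> V))\<^sup>*)"

definition graph_has_cycle :: "'v set \<Rightarrow> ('v \<times> 'v) set \<Rightarrow> bool" where
  "graph_has_cycle V E \<longleftrightarrow>
     (\<exists>cs. length cs \<ge> 3 \<and> distinct cs \<and> set cs \<subseteq> V \<and>
           (\<forall>i<length cs. (cs ! i, cs ! ((i + 1) mod length cs)) \<in> E))"

definition graph_tree :: "'v set \<Rightarrow> ('v \<times> 'v) set \<Rightarrow> bool" where
  "graph_tree V E \<longleftrightarrow> graph_connected V E \<and> \<not> graph_has_cycle V E"

definition dendric_word :: "(int \<Rightarrow> nat) set \<Rightarrow> nat list \<Rightarrow> bool" where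
  "dendric_word X w \<longleftrightarrow> graph_tree (ext_vertices X w) (ext_edges X w)"

definition bispecial :: "(int \<Rightarrow> nat) set \<Rightarrow> nat list \<Rightarrow> bool" where
  "bispecial X w \<longleftrightarrow> w \<in> lang X \<and> card (left_ext X w) \<ge> 2 \<and> card (right_ext X w) \<ge> 2"

definition dendric :: "(int \<Rightarrow> nat) set \<Rightarrow> bool" where
  "dendric X \<longleftrightarrow> (\<forall>w\<in>lang X. dendric_word X w)"

type_synonym morph = "nat \<Rightarrow> nat list"

definition mor_alpha :: morph where
  "mor_alpha n = (if n = 1 then [1] else if n = 2 then [1,2] else if n = 3 then [1,3] else [])"
definition mor_beta :: morph where
  "mor_beta n = (if n = 1 then [1] else if n = 2 then [1,2] else if n = 3 then [1,3,2] else [])"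
definition mor_gamma :: morph where
  "mor_gamma n = (if n = 1 then [1] else if n = 2 then [1,2] else if n = 3 then [1,2,3] else [])"
definition mor_delta :: "nat \<Rightarrow> morph" where
  "mor_delta k n = (if n = 1 then [1] else if n = 2 then [1,2] @ replicate k 3
                    else if n = 3 then [1,2] @ replicate (k+1) 3 else [])"
definition mor_zeta :: "nat \<Rightarrow> morph" where
  "mor_zeta k n = (if n = 1 then 1 # replicate k 3 else if n = 2 then [1,2]
                   else if n = 3 then 1 # replicate (k+1) 3 else [])"
definition mor_eta :: morph where
  "mor_eta n = (if n = 1 then [1,3] else if n = 2 then [1,2] else if n = 3 then [1,2,3] else [])"

definition S3 :: "morph set" where
  "S3 = {mor_alpha, mor_beta, mor_gamma, mor_eta}
        \<union> {mor_delta k | k. k \<ge> 1} \<union> {mor_zeta k | k. k \<ge> 1}"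

definition mor_word :: "morph \<Rightarrow> nat list \<Rightarrow> nat list" where
  "mor_word \<sigma> v = concat (map \<sigma> v)"

text \<open>Position in sigma(x) at which the block sigma(x_i) starts (block of x_0 starts at 0).\<close>
definition cum :: "morph \<Rightarrow> (int \<Rightarrow> nat) \<Rightarrow> int \<Rightarrow> int" where
  "cum \<sigma> x i = (if i \<ge> 0 then (\<Sum>j\<in>{0..<i}. int (length (\<sigma> (x j))))
                 else - (\<Sum>j\<in>{i..<0}. int (length (\<sigma> (x j)))))"

text \<open>The bi-infinite sequence sigma(x) = ... sigma(x_{-1}) . sigma(x_0) sigma(x_1) ...\<close>
definition mor_seq :: "morph \<Rightarrow> (int \<Rightarrow> nat) \<Rightarrow> (int \<Rightarrow> nat)" where
  "mor_seq \<sigma> x n =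
     (let i = (THE i. cum \<sigma> x i \<le> n \<and> n < cum \<sigma> x (i + 1))
      in \<sigma> (x i) ! nat (n - cum \<sigma> x i))"

definition image_shift :: "morph \<Rightarrow> (int \<Rightarrow> nat) set \<Rightarrow> (int \<Rightarrow> nat) set" where
  "image_shift \<sigma> X = {(shift ^^ k) (mor_seq \<sigma> x) | x k. x \<in> X \<and> k < length (\<sigma> (x 0))}"

text \<open>u is an extended image of v: u = s sigma(v) p with s a proper suffix of sigma(a),
p a non-empty prefix of sigma(b), a v b in L(X) (and u in L(Y)).\<close>
definition ext_image :: "(int \<Rightarrow> nat) set \<Rightarrow> morph \<Rightarrow> nat list \<Rightarrow> nat list \<Rightarrow> bool" where
  "ext_image X \<sigma> v u \<longleftrightarrow> u \<in> lang (image_shift \<sigma> X) \<and>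
     (\<exists>s p a b. [a] @ v @ [b] \<in> lang X \<and> strict_suffix s (\<sigma> a) \<and>
                prefix p (\<sigma> b) \<and> p \<noteq> [] \<and> u = s @ mor_word \<sigma> v @ p)"

definition DP :: "(int \<Rightarrow> nat) set \<Rightarrow> morph set" where
  "DP X = {\<sigma> \<in> S3. \<forall>v\<in>lang X. \<forall>u. ext_image X \<sigma> v u \<and> bispecial (image_shift \<sigma> X) u
                                      \<longrightarrow> dendric_word (image_shift \<sigma> X) u}"

end

theory Submission
  imports Defs
begin

text \<open>
  For \<sigma> \<in> S3 every block \<sigma>(c) starts with the letter 1 and contains no other 1, so in the
  image Y the occurrences of 1 are exactly the block boundaries. Hence a factor of Y containing 1
  is an extended image of a factor of X, and when it is bispecial the hypothesis \<sigma> \<in> DP(X) makes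
  it dendric. A factor w without 1 fits into one block followed by the 1 of the next block; since
  every letter occurs in X, its extension pairs are exactly the pairs (a, b) with a w b a factor
  of some \<sigma>(c) 1. For each morphism of S3 these are computed explicitly and form a tree whenever w
  is bispecial; for \<delta>^(k) and \<zeta>^(k) the words 3^j give paths. A word that is not bispecial has a
  star as extension graph.
\<close>

definition window :: "(int \<Rightarrow> 'a) \<Rightarrow> int \<Rightarrow> nat \<Rightarrow> 'a list" where
  "window f i L = map (\<lambda>j. f (i + int j)) [0..<L]"

lemma length_window [simp]: "length (window f i L) = L"
  by (simp add: window_def)

lemma nth_window [simp]: "j < L \<Longrightarrow> window f i L ! j = f (i + int j)"
  by (simp add: window_def)

lemma lang_eq_windows: "lang X = {w. \<exists>x\<in>X. \<exists>i. w = window x i (length w)}"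
  by (simp add: lang_def window_def)

lemma window_add: "window f i (L + M) = window f i L @ window f (i + int L) M"
  by (rule nth_equalityI) (auto simp: nth_append add.assoc)

lemma window_Suc: "window f i (Suc L) = f i # window f (i + 1) L"
  by (rule nth_equalityI) (auto simp: nth_Cons ac_simps split: nat.splits)

lemma window_Suc_snoc: "window f i (Suc L) = window f i L @ [f (i + int L)]"
  using window_add[of f i L 1] by (simp add: window_def)

lemma window_Suc_Suc: "window f i (Suc (Suc L)) = f i # window f (i + 1) L @ [f (i + 1 + int L)]"
  by (simp only: window_Suc[of f i "Suc L"] window_Suc_snoc[of f "i + 1" L])

lemma take_window: "k \<le> L \<Longrightarrow> take k (window f i L) = window f i k"
  by (rule nth_equalityI) auto

lemma drop_window: "drop k (window f i L) = window f (i + int k) (L - k)"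
  by (rule nth_equalityI) (auto simp: ac_simps)

lemma sublist_window_is_window:
  assumes "sublist w (window f i L)"
  obtains j where "w = window f j (length w)"
proof -
  obtain ps ss where split: "window f i L = ps @ w @ ss"
    using assms by (auto simp: sublist_def)
  have "w = take (length w) (drop (length ps) (window f i L))"
    by (simp add: split)
  also have "\<dots> = window f (i + int (length ps)) (length w)"
    using arg_cong[OF split, of length] by (simp add: drop_window take_window)
  finally show thesis by (rule that)
qed

lemma window_sublist_window:
  assumes "d + L \<le> N"
  shows "sublist (window f (i + int d) L) (window f i N)"
proof -
  obtain r where "N = d + (L + r)" using assms by (metis add.assoc le_Suc_ex)
  then show ?thesis by (simp add: window_add)
qed

lemma window_in_lang: "x \<in> X \<Longrightarrow> window x i L \<in> lang X"
  unfolding lang_eq_windows by auto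

lemma lang_sublist:
  assumes "u \<in> lang X" and "sublist w u"
  shows "w \<in> lang X"
proof -
  obtain x i where "x \<in> X" and "u = window x i (length u)"
    using assms(1) by (auto simp: lang_eq_windows)
  with assms(2) obtain j where "w = window x j (length w)"
    by (metis sublist_window_is_window)
  with \<open>x \<in> X\<close> show ?thesis by (auto simp: lang_eq_windows)
qed

lemma lang_extend_both:
  assumes "w \<in> lang X"
  obtains a b where "[a] @ w @ [b] \<in> lang X"
proof -
  obtain x i where "x \<in> X" and w: "w = window x i (length w)"
    using assms by (auto simp: lang_eq_windows)
  have "[x (i - 1)] @ w @ [x (i + int (length w))] = window x (i - 1) (Suc (Suc (length w)))"
    by (simp add: window_Suc_Suc flip: w)
  then show thesis using that window_in_lang[OF \<open>x \<in> X\<close>] by metis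
qed

definition ext_pairs :: "(int \<Rightarrow> nat) set \<Rightarrow> nat list \<Rightarrow> (nat \<times> nat) set" where
  "ext_pairs X w = {(a, b). [a] @ w @ [b] \<in> lang X}"

lemma left_ext_eq_Domain: "w \<in> lang X \<Longrightarrow> left_ext X w = Domain (ext_pairs X w)"
proof (intro set_eqI iffI)
  fix a assume "a \<in> left_ext X w"
  then have "a # w \<in> lang X" by (simp add: left_ext_def)
  then obtain a' b where "[a'] @ (a # w) @ [b] \<in> lang X" by (rule lang_extend_both)
  then have "[a] @ w @ [b] \<in> lang X"
    by (rule lang_sublist) (simp add: sublist_Cons_right)
  then show "a \<in> Domain (ext_pairs X w)" by (auto simp: ext_pairs_def)
next
  fix a assume "a \<in> Domain (ext_pairs X w)"
  then show "a \<in> left_ext X w"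
    unfolding ext_pairs_def left_ext_def by (auto elim: lang_sublist)
qed

lemma right_ext_eq_Range: "w \<in> lang X \<Longrightarrow> right_ext X w = Range (ext_pairs X w)"
proof (intro set_eqI iffI)
  fix b assume "b \<in> right_ext X w"
  then have "w @ [b] \<in> lang X" by (simp add: right_ext_def)
  then obtain a b' where "[a] @ (w @ [b]) @ [b'] \<in> lang X" by (rule lang_extend_both)
  then have "[a] @ w @ [b] \<in> lang X"
    by (rule lang_sublist) (metis append.assoc sublist_append_rightI)
  then show "b \<in> Range (ext_pairs X w)" by (auto simp: ext_pairs_def)
next
  fix b assume "b \<in> Range (ext_pairs X w)"
  then obtain a where "[a] @ w @ [b] \<in> lang X" by (auto simp: ext_pairs_def)
  then have "w @ [b] \<in> lang X" by (rule lang_sublist) (simp add: sublist_Cons_right)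
  then show "b \<in> right_ext X w" by (simp add: right_ext_def)
qed

lemma card_ge_3_if_has_cycle: "graph_has_cycle V E \<Longrightarrow> finite V \<Longrightarrow> 3 \<le> card V"
  unfolding graph_has_cycle_def by (metis card_mono distinct_card order_trans)

lemma graph_tree_singleton: "graph_tree {v} E"
  unfolding graph_tree_def graph_connected_def using card_ge_3_if_has_cycle[of "{v}" E] by auto

lemma graph_has_cycle_restrict: "graph_has_cycle V (E \<inter> V \<times> V) \<longleftrightarrow> graph_has_cycle V E"
proof -
  have "(cs ! i, cs ! ((i + 1) mod length cs)) \<in> V \<times> V"
    if "set cs \<subseteq> V" and "i < length cs" for cs :: "'a list" and i
  proof -
    have "(i + 1) mod length cs < length cs"
      by (rule mod_less_divisor) (use that(2) in linarith)
    then show ?thesis using that by (auto dest: nth_mem)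
  qed
  then show ?thesis unfolding graph_has_cycle_def by blast
qed

lemma graph_tree_cong: "E \<inter> V \<times> V = E' \<inter> V \<times> V \<Longrightarrow> graph_tree V E \<longleftrightarrow> graph_tree V E'"
  by (metis graph_tree_def graph_connected_def graph_has_cycle_restrict)

lemma cyclic_pred_index:
  fixes i n :: nat
  assumes "i < n" and "3 \<le> n"
  obtains p where "p < n" and "(p + 1) mod n = i" and "p \<noteq> (i + 1) mod n"
proof (cases "i = 0")
  case True
  then show thesis using assms by (intro that[of "n - 1"]) auto
next
  case False
  then show thesis using assms by (intro that[of "i - 1"]) (auto simp: mod_Suc)
qed

lemma graph_connected_insert_leaf:
  assumes sym: "\<And>a b. (a, b) \<in> E \<Longrightarrow> (b, a) \<in> E"
    and "graph_connected V E" and "u \<in> V" and "(v, u) \<in> E"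
  shows "graph_connected (insert v V) E"
  unfolding graph_connected_def
proof (intro conjI ballI)
  let ?R = "E \<inter> insert v V \<times> insert v V"
  have "E \<inter> V \<times> V \<subseteq> ?R" by auto
  then have conn: "(a, b) \<in> ?R\<^sup>*" if "a \<in> V" "b \<in> V" for a b
    using assms(2) that rtrancl_mono unfolding graph_connected_def by blast
  have vu: "(v, u) \<in> ?R" "(u, v) \<in> ?R"
    using assms(3,4) sym by auto
  fix a b assume "a \<in> insert v V" and "b \<in> insert v V"
  then show "(a, b) \<in> ?R\<^sup>*"
    using conn[of a u] conn[of u b] conn[of a b] \<open>u \<in> V\<close> vu
    by (auto intro: rtrancl_into_rtrancl converse_rtrancl_into_rtrancl)
qed simp

lemma graph_has_cycle_insert_leaf:
  assumes sym: "\<And>a b. (a, b) \<in> E \<Longrightarrow> (b, a) \<in> E"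
    and "\<not> graph_has_cycle V E"
    and leaf: "\<And>w. w \<in> V \<Longrightarrow> (v, w) \<in> E \<Longrightarrow> w = u"
  shows "\<not> graph_has_cycle (insert v V) E"
proof
  assume "graph_has_cycle (insert v V) E"
  then obtain cs where len: "3 \<le> length cs" and "distinct cs" and cs: "set cs \<subseteq> insert v V"
    and adj: "\<forall>i<length cs. (cs ! i, cs ! ((i + 1) mod length cs)) \<in> E"
    unfolding graph_has_cycle_def by blast
  have "v \<in> set cs"
    using assms(2) \<open>distinct cs\<close> cs adj len unfolding graph_has_cycle_def by blast
  then obtain i where i: "i < length cs" "cs ! i = v" by (meson in_set_conv_nth)
  \<comment> \<open>the two cycle neighbours of v are distinct vertices of V adjacent to v, hence both equal u\<close>
  let ?next = "(i + 1) mod length cs"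
  obtain p where p: "p < length cs" "(p + 1) mod length cs = i" "p \<noteq> ?next"
    using cyclic_pred_index[OF i(1) len] by blast
  have next_lt: "?next < length cs"
    by (rule mod_less_divisor) (use len in linarith)
  have "?next \<noteq> i" "p \<noteq> i"
    using i(1) len p(1,2) by (auto simp: mod_Suc split: if_split_asm)
  then have "cs ! ?next \<noteq> v" "cs ! p \<noteq> v"
    using \<open>distinct cs\<close> i p(1) next_lt by (metis nth_eq_iff_index_eq)+
  moreover have "(v, cs ! ?next) \<in> E" "(v, cs ! p) \<in> E"
    using adj i p sym by auto
  ultimately have "cs ! ?next = u" "cs ! p = u"
    using cs p(1) next_lt leaf by (meson insertE nth_mem subsetD)+
  then show False
    using \<open>distinct cs\<close> p(1,3) next_lt by (metis nth_eq_iff_index_eq)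
qed

lemma graph_tree_insert_leaf:
  assumes "\<And>a b. (a, b) \<in> E \<Longrightarrow> (b, a) \<in> E"
    and "graph_tree V E" and "u \<in> V" and "(v, u) \<in> E"
    and "\<And>w. w \<in> V \<Longrightarrow> (v, w) \<in> E \<Longrightarrow> w = u"
  shows "graph_tree (insert v V) E"
  using assms graph_connected_insert_leaf graph_has_cycle_insert_leaf
  unfolding graph_tree_def by metis

definition bip_vertices :: "('a \<times> 'b) set \<Rightarrow> ('a + 'b) set" where
  "bip_vertices R = Inl ` Domain R \<union> Inr ` Range R"

definition bip_edges :: "('a \<times> 'b) set \<Rightarrow> (('a + 'b) \<times> ('a + 'b)) set" where
  "bip_edges R = {(Inl a, Inr b) | a b. (a, b) \<in> R} \<union> {(Inr b, Inl a) | a b. (a, b) \<in> R}"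

abbreviation bip_tree :: "('a \<times> 'b) set \<Rightarrow> bool" where
  "bip_tree R \<equiv> graph_tree (bip_vertices R) (bip_edges R)"

lemma dendric_word_iff_bip_tree:
  "w \<in> lang X \<Longrightarrow> dendric_word X w \<longleftrightarrow> bip_tree (ext_pairs X w)"
  by (simp add: dendric_word_def ext_vertices_def ext_edges_def bip_vertices_def bip_edges_def
      left_ext_eq_Domain right_ext_eq_Range) (simp add: ext_pairs_def)

lemma bispecial_iff_card_ext_pairs:
  "bispecial X w \<longleftrightarrow> w \<in> lang X \<and> 2 \<le> card (Domain (ext_pairs X w)) \<and> 2 \<le> card (Range (ext_pairs X w))"
  by (auto simp: bispecial_def left_ext_eq_Domain right_ext_eq_Range)

lemma bip_tree_singleton: "bip_tree {(a, b)}"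
proof -
  have "graph_tree (insert (Inl a) {Inr b}) (bip_edges {(a, b)})"
    by (rule graph_tree_insert_leaf[OF _ graph_tree_singleton]) (auto simp: bip_edges_def)
  then show ?thesis by (simp add: bip_vertices_def insert_commute)
qed

lemma bip_edges_insert:
  "bip_edges (insert (a, b) R) = {(Inl a, Inr b), (Inr b, Inl a)} \<union> bip_edges R"
  by (auto simp: bip_edges_def)

lemma bip_edges_sym: "(y, z) \<in> bip_edges R \<Longrightarrow> (z, y) \<in> bip_edges R"
  by (auto simp: bip_edges_def)

lemma bip_tree_insert_leaf:
  assumes "bip_tree R"
    and "a \<notin> Domain R \<and> b \<in> Range R \<or> a \<in> Domain R \<and> b \<notin> Range R"
  shows "bip_tree (insert (a, b) R)"
proof -
  let ?V = "bip_vertices R" and ?E = "bip_edges (insert (a, b) R)"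
  have "Inl a \<notin> ?V \<or> Inr b \<notin> ?V"
    using assms(2) by (auto simp: bip_vertices_def)
  then have "?E \<inter> ?V \<times> ?V = bip_edges R \<inter> ?V \<times> ?V"
    unfolding bip_edges_insert by blast
  with assms(1) have tree: "graph_tree ?V ?E" using graph_tree_cong by blast
  note leaf = graph_tree_insert_leaf[OF bip_edges_sym tree]
  from assms(2) show ?thesis
  proof
    assume new_a: "a \<notin> Domain R \<and> b \<in> Range R"
    then have "graph_tree (insert (Inl a) ?V) ?E"
      by (intro leaf[of "Inr b"]) (auto simp: bip_vertices_def bip_edges_def)
    then show ?thesis using new_a by (simp add: bip_vertices_def insert_absorb)
  next
    assume new_b: "a \<in> Domain R \<and> b \<notin> Range R"
    then have "graph_tree (insert (Inr b) ?V) ?E"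
      by (intro leaf[of "Inl a"]) (auto simp: bip_vertices_def bip_edges_def)
    then show ?thesis using new_b by (simp add: bip_vertices_def insert_absorb)
  qed
qed

lemma bip_tree_if_Domain_singleton:
  assumes "finite R" and "Domain R = {a}"
  shows "bip_tree R"
  using assms
proof (induction R rule: finite_induct)
  case (insert p R)
  then obtain b where p: "p = (a, b)" by (cases p) auto
  show ?case
  proof (cases "R = {}")
    case True
    then show ?thesis using p bip_tree_singleton by simp
  next
    case False
    then have "Domain R = {a}" using insert.prems p by auto
    moreover have "b \<notin> Range R" using insert.hyps(2) p calculation by auto
    ultimately show ?thesis using insert.IH p by (simp add: bip_tree_insert_leaf)
  qed
qed simp

lemma bip_tree_if_Range_singleton:
  assumes "finite R" and "Range R = {b}"
  shows "bip_tree R"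
  using assms
proof (induction R rule: finite_induct)
  case (insert p R)
  then obtain a where p: "p = (a, b)" by (cases p) auto
  show ?case
  proof (cases "R = {}")
    case True
    then show ?thesis using p bip_tree_singleton by simp
  next
    case False
    then have "Range R = {b}" using insert.prems p by auto
    moreover have "a \<notin> Domain R" using insert.hyps(2) p calculation by auto
    ultimately show ?thesis using insert.IH p by (simp add: bip_tree_insert_leaf)
  qed
qed simp

lemma bip_tree_if_not_bispecial:
  assumes "finite R" and "R \<noteq> {}" and "card (Domain R) < 2 \<or> card (Range R) < 2"
  shows "bip_tree R"
proof -
  have "card (Domain R) = 1 \<or> card (Range R) = 1"
    using assms by (auto simp: less_2_cases_iff finite_Domain finite_Range)
  then show ?thesis
    using assms(1) bip_tree_if_Domain_singleton bip_tree_if_Range_singleton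
    by (metis card_1_singletonE)
qed

lemma cum_0 [simp]: "cum \<sigma> x 0 = 0"
  by (simp add: cum_def)

lemma cum_add1: "cum \<sigma> x (i + 1) = cum \<sigma> x i + int (length (\<sigma> (x i)))"
proof -
  consider "0 \<le> i" | "i = -1" | "i < -1" by linarith
  then show ?thesis
  proof cases
    case 1
    then have "{0..<i + 1} = insert i {0..<i}" by auto
    with 1 show ?thesis by (simp add: cum_def)
  next
    case 2
    moreover have "{-1..<0::int} = {-1}" by auto
    ultimately show ?thesis by (simp add: cum_def)
  next
    case 3
    then have "{i..<0} = insert i {i + 1..<0}" by auto
    with 3 show ?thesis by (simp add: cum_def)
  qed
qed

locale block_decomposition =
  fixes \<sigma> :: morph and x :: "int \<Rightarrow> nat"
  assumes nonempty_block: "\<And>i. \<sigma> (x i) \<noteq> []"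
begin

abbreviation start :: "int \<Rightarrow> int" where
  "start \<equiv> cum \<sigma> x"

lemma start_add1: "start (i + 1) = start i + int (length (\<sigma> (x i)))"
  by (rule cum_add1)

lemma start_add_ge: "start i + int n \<le> start (i + int n)"
proof (induction n)
  case (Suc n)
  have "start (i + int (Suc n)) = start (i + int n) + int (length (\<sigma> (x (i + int n))))"
    using start_add1[of "i + int n"] by (simp add: ac_simps)
  moreover have "0 < length (\<sigma> (x (i + int n)))" using nonempty_block by simp
  ultimately show ?case using Suc.IH by linarith
qed simp

lemma strict_mono_start: "strict_mono start"
proof (rule strict_monoI)
  fix i j :: int assume "i < j"
  then have "start (i + 1) + int (nat (j - i - 1)) \<le> start j"
    using start_add_ge[of "i + 1" "nat (j - i - 1)"] by simp
  moreover have "start i < start (i + 1)"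
    using start_add1[of i] nonempty_block[of i] by simp
  ultimately show "start i < start j" by linarith
qed

lemma start_less_iff [simp]: "start i < start j \<longleftrightarrow> i < j"
  by (rule strict_mono_less[OF strict_mono_start])

lemma start_le_iff [simp]: "start i \<le> start j \<longleftrightarrow> i \<le> j"
  by (rule strict_mono_less_eq[OF strict_mono_start])

lemma block_exists:
  obtains i where "start i \<le> n" and "n < start (i + 1)"
proof -
  define lo where "lo = min n 0"
  have lo: "start lo \<le> n"
  proof (cases "0 \<le> n")
    case False
    then show ?thesis
      using start_add_ge[of n "nat (- n)"] by (simp add: lo_def)
  qed (simp add: lo_def)
  have "\<exists>i. start i \<le> n \<and> n < start (i + 1)" if "n < start (lo + int t)" for t
    using that
  proof (induction t)
    case (Suc t)
    show ?case
    proof (cases "n < start (lo + int t)")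
      case False
      with Suc.prems show ?thesis by (intro exI[of _ "lo + int t"]) (simp add: ac_simps)
    qed (rule Suc.IH)
  qed (use lo in simp)
  moreover have "n < start (lo + int (nat (n - start lo) + 1))"
    using start_add_ge[of lo "nat (n - start lo) + 1"] lo by simp
  ultimately show thesis using that by blast
qed

lemma block_unique:
  assumes "start i \<le> n" "n < start (i + 1)" "start j \<le> n" "n < start (j + 1)"
  shows "i = j"
proof -
  have "i < j + 1" "j < i + 1"
    using assms by (metis le_less_trans start_less_iff)+
  then show ?thesis by simp
qed

lemma mor_seq_block:
  assumes "start i \<le> n" and "n < start (i + 1)"
  shows "mor_seq \<sigma> x n = \<sigma> (x i) ! nat (n - start i)"
proof -
  have "(THE i. start i \<le> n \<and> n < start (i + 1)) = i"
    using assms block_unique by blast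
  then show ?thesis by (simp add: mor_seq_def)
qed

lemma mor_seq_start_add: "r < length (\<sigma> (x i)) \<Longrightarrow> mor_seq \<sigma> x (start i + int r) = \<sigma> (x i) ! r"
  using mor_seq_block[of i "start i + int r"] start_add1[of i] by simp

lemma window_block_drop:
  "d \<le> length (\<sigma> (x i)) \<Longrightarrow>
   window (mor_seq \<sigma> x) (start i + int d) (length (\<sigma> (x i)) - d) = drop d (\<sigma> (x i))"
  by (rule nth_equalityI) (simp_all add: add.assoc flip: mor_seq_start_add)

lemma window_block_take: "q \<le> length (\<sigma> (x i)) \<Longrightarrow> window (mor_seq \<sigma> x) (start i) q = take q (\<sigma> (x i))"
  by (rule nth_equalityI) (simp_all add: mor_seq_start_add)

lemma window_blocks:
  "window (mor_seq \<sigma> x) (start i) (nat (start (i + int n) - start i)) = mor_word \<sigma> (window x i n)"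
proof (induction n)
  case (Suc n)
  let ?j = "i + int n"
  have "start (i + int (Suc n)) = start ?j + int (length (\<sigma> (x ?j)))"
    using start_add1[of ?j] by (simp add: ac_simps)
  moreover have "start i \<le> start ?j" by simp
  ultimately have "nat (start (i + int (Suc n)) - start i) = nat (start ?j - start i) + length (\<sigma> (x ?j))"
    by linarith
  then show ?case
    using Suc.IH window_block_drop[of 0 ?j]
    by (simp add: window_add window_Suc_snoc mor_word_def)
qed (simp add: mor_word_def window_def)

lemma window_strict_suffix_block:
  assumes "start (i - 1) < m" and "m \<le> start i"
  shows "strict_suffix (window (mor_seq \<sigma> x) m (nat (start i - m))) (\<sigma> (x (i - 1)))"
proof -
  define d where "d = nat (m - start (i - 1))"
  have start_i: "start i = start (i - 1) + int (length (\<sigma> (x (i - 1))))"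
    using start_add1[of "i - 1"] by simp
  have "0 < d" "d \<le> length (\<sigma> (x (i - 1)))" "m = start (i - 1) + int d"
    using assms start_i by (auto simp: d_def)
  moreover have "nat (start i - m) = length (\<sigma> (x (i - 1))) - d"
    using calculation start_i by simp
  ultimately show ?thesis
    using window_block_drop[of d "i - 1"]
    by (auto simp: strict_suffix_def suffix_drop dest: arg_cong[of _ _ length])
qed

lemma window_prefix_block:
  "start i + int q \<le> start (i + 1) \<Longrightarrow> prefix (window (mor_seq \<sigma> x) (start i) q) (\<sigma> (x i))"
  using window_block_take[of q i] start_add1[of i] by (simp add: take_is_prefix)

end

definition factor_pairs :: "'a list \<Rightarrow> 'a list \<Rightarrow> ('a \<times> 'a) set" where
  "factor_pairs w u = {(a, b). sublist (a # w @ [b]) u}"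

definition block_ext :: "morph \<Rightarrow> nat list \<Rightarrow> (nat \<times> nat) set" where
  "block_ext \<sigma> w = (\<Union>c\<in>A3. factor_pairs w (\<sigma> c @ [1]))"

lemma S3_eq_Cons_1:
  assumes "\<sigma> \<in> S3" and "c \<in> A3"
  obtains t where "\<sigma> c = 1 # t" and "set t \<subseteq> {2, 3}"
  using assms unfolding S3_def A3_def
  by (auto simp: mor_alpha_def mor_beta_def mor_gamma_def mor_eta_def mor_delta_def mor_zeta_def)

lemma nth_S3_eq_1_iff:
  assumes "\<sigma> \<in> S3" and "c \<in> A3" and "r < length (\<sigma> c)"
  shows "\<sigma> c ! r = 1 \<longleftrightarrow> r = 0"
proof -
  obtain t where t: "\<sigma> c = 1 # t" "set t \<subseteq> {2, 3}" using S3_eq_Cons_1[OF assms(1,2)] .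
  show ?thesis
  proof (cases r)
    case (Suc q)
    then have "t ! q \<in> set t" using assms(3) t(1) by simp
    then show ?thesis using t Suc by auto
  qed (simp add: t)
qed

lemma funpow_shift: "(shift ^^ k) f n = f (n + int k)"
  by (induction k arbitrary: n) (auto simp: shift_def ac_simps)

locale S3_image =
  fixes X :: "(int \<Rightarrow> nat) set" and \<sigma> :: morph
  assumes shift_space: "shift_space A3 X" and S3: "\<sigma> \<in> S3"
begin

abbreviation Y :: "(int \<Rightarrow> nat) set" where
  "Y \<equiv> image_shift \<sigma> X"

lemma letter_in_A3: "x \<in> X \<Longrightarrow> x n \<in> A3"
  using shift_space by (auto simp: shift_space_def)

lemma block_nonempty: "x \<in> X \<Longrightarrow> \<sigma> (x i) \<noteq> []"
  by (metis S3_eq_Cons_1 S3 letter_in_A3 list.distinct(1))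

lemma block_decomposition_X: "x \<in> X \<Longrightarrow> block_decomposition \<sigma> x"
  by unfold_locales (rule block_nonempty)

lemma mor_seq_eq_1_iff:
  assumes "x \<in> X"
  shows "mor_seq \<sigma> x n = 1 \<longleftrightarrow> (\<exists>i. n = cum \<sigma> x i)"
proof -
  interpret block_decomposition \<sigma> x using assms by (rule block_decomposition_X)
  obtain i where i: "start i \<le> n" "n < start (i + 1)" by (rule block_exists)
  have r: "nat (n - start i) < length (\<sigma> (x i))" using i start_add1[of i] by simp
  have "mor_seq \<sigma> x n = 1 \<longleftrightarrow> n = start i"
    using mor_seq_block[OF i] nth_S3_eq_1_iff[OF S3 letter_in_A3[OF assms] r] i by auto
  also have "\<dots> \<longleftrightarrow> (\<exists>j. n = start j)"
    using i by (metis block_unique order.refl start_less_iff less_add_one)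
  finally show ?thesis .
qed

lemma mor_seq_in_A3:
  assumes "x \<in> X"
  shows "mor_seq \<sigma> x n \<in> A3"
proof -
  interpret block_decomposition \<sigma> x using assms by (rule block_decomposition_X)
  obtain i where i: "start i \<le> n" "n < start (i + 1)" by (rule block_exists)
  obtain t where "\<sigma> (x i) = 1 # t" "set t \<subseteq> {2, 3}"
    using S3_eq_Cons_1[OF S3 letter_in_A3[OF assms]] .
  moreover have "nat (n - start i) < length (\<sigma> (x i))" using i start_add1[of i] by simp
  ultimately show ?thesis
    using mor_seq_block[OF i] nth_mem[of "nat (n - start i)" "\<sigma> (x i)"] by (auto simp: A3_def)
qed

lemma lang_image_shift: "u \<in> lang Y \<longleftrightarrow> (\<exists>x\<in>X. \<exists>m. u = window (mor_seq \<sigma> x) m (length u))"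
proof
  assume "u \<in> lang Y"
  then obtain y i where "y \<in> Y" and u: "u = window y i (length u)" by (auto simp: lang_eq_windows)
  then obtain x k where "x \<in> X" and "y = (shift ^^ k) (mor_seq \<sigma> x)" by (auto simp: image_shift_def)
  with u have "u = window (mor_seq \<sigma> x) (i + int k) (length u)"
    by (simp add: window_def funpow_shift ac_simps)
  with \<open>x \<in> X\<close> show "\<exists>x\<in>X. \<exists>m. u = window (mor_seq \<sigma> x) m (length u)" by blast
next
  assume "\<exists>x\<in>X. \<exists>m. u = window (mor_seq \<sigma> x) m (length u)"
  then obtain x m where "x \<in> X" and u: "u = window (mor_seq \<sigma> x) m (length u)" by blast
  have "0 < length (\<sigma> (x 0))" using block_nonempty[OF \<open>x \<in> X\<close>] by simp
  then have "mor_seq \<sigma> x \<in> Y"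
    unfolding image_shift_def using \<open>x \<in> X\<close> by (intro CollectI exI[of _ x] exI[of _ 0]) simp
  with u show "u \<in> lang Y" by (auto simp: lang_eq_windows)
qed

lemma set_lang_image_shift:
  assumes "u \<in> lang Y"
  shows "set u \<subseteq> A3"
proof -
  obtain x m where "x \<in> X" and "u = window (mor_seq \<sigma> x) m (length u)"
    using assms lang_image_shift by blast
  then show ?thesis by (metis image_subset_iff mor_seq_in_A3 set_map window_def)
qed

lemma finite_ext_pairs: "finite (ext_pairs Y w)"
proof (rule finite_subset)
  show "ext_pairs Y w \<subseteq> A3 \<times> A3"
    by (auto simp: ext_pairs_def dest!: set_lang_image_shift)
qed (simp add: A3_def)

lemma window_block_snoc_1:
  assumes "x \<in> X"
  shows "window (mor_seq \<sigma> x) (cum \<sigma> x i) (Suc (length (\<sigma> (x i)))) = \<sigma> (x i) @ [1]"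
proof -
  interpret block_decomposition \<sigma> x using assms by (rule block_decomposition_X)
  have "mor_seq \<sigma> x (start (i + 1)) = 1" using mor_seq_eq_1_iff[OF assms] by blast
  then show ?thesis
    using window_block_drop[of 0 i] start_add1[of i] by (simp add: window_Suc_snoc)
qed

lemma block_start_outside_window:
  assumes "x \<in> X" and "1 \<notin> set (window (mor_seq \<sigma> x) m L)"
  shows "cum \<sigma> x i < m \<or> m + int L \<le> cum \<sigma> x i"
proof (rule ccontr)
  assume "\<not> ?thesis"
  then have "nat (cum \<sigma> x i - m) < L" and "m + int (nat (cum \<sigma> x i - m)) = cum \<sigma> x i" by auto
  then have "window (mor_seq \<sigma> x) m L ! nat (cum \<sigma> x i - m) = 1"
    using mor_seq_eq_1_iff[OF assms(1)] by auto
  with assms(2) \<open>nat (cum \<sigma> x i - m) < L\<close> show False by (metis length_window nth_mem)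
qed

lemma strict_suffix_block_if_window_before_start:
  assumes "x \<in> X" and no1: "1 \<notin> set (window (mor_seq \<sigma> x) m L)" and end_: "m + int L = cum \<sigma> x i"
  shows "strict_suffix (window (mor_seq \<sigma> x) m L) (\<sigma> (x (i - 1)))"
proof -
  interpret block_decomposition \<sigma> x using assms(1) by (rule block_decomposition_X)
  have "start (i - 1) < m"
    using block_start_outside_window[OF assms(1) no1, of "i - 1"] end_ by auto
  moreover have "nat (start i - m) = L" using end_ by simp
  ultimately show ?thesis using window_strict_suffix_block[of i m] end_ by simp
qed

lemma prefix_block_if_window_from_start:
  assumes "x \<in> X" and no1: "1 \<notin> set (window (mor_seq \<sigma> x) (cum \<sigma> x i + 1) L)"
  shows "prefix (window (mor_seq \<sigma> x) (cum \<sigma> x i) (Suc L)) (\<sigma> (x i))"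
proof -
  interpret block_decomposition \<sigma> x using assms(1) by (rule block_decomposition_X)
  have "start i < start (i + 1)" by simp
  then have "start i + int (Suc L) \<le> start (i + 1)"
    using block_start_outside_window[OF assms(1) no1, of "i + 1"] by auto
  then show ?thesis by (rule window_prefix_block)
qed

lemma ext_pairs_subset_block_ext:
  assumes "1 \<notin> set w"
  shows "ext_pairs Y w \<subseteq> block_ext \<sigma> w"
proof clarify
  fix a b
  let ?u = "a # w @ [b]"
  assume "(a, b) \<in> ext_pairs Y w"
  then obtain x m where "x \<in> X" and u: "?u = window (mor_seq \<sigma> x) m (length ?u)"
    by (auto simp: ext_pairs_def lang_image_shift)
  interpret block_decomposition \<sigma> x using \<open>x \<in> X\<close> by (rule block_decomposition_X)
  obtain i where i: "start i \<le> m" "m < start (i + 1)" by (rule block_exists)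
  have "w = window (mor_seq \<sigma> x) (m + 1) (length w)"
    using u by (simp add: window_Suc_Suc)
  then have "m + 1 + int (length w) \<le> start (i + 1)"
    using block_start_outside_window[OF \<open>x \<in> X\<close>, of "m + 1" "length w" "i + 1"] assms i(2) by auto
  then have "nat (m - start i) + length ?u \<le> Suc (length (\<sigma> (x i)))"
    using i(1) start_add1[of i] by simp
  then have "sublist (window (mor_seq \<sigma> x) (start i + int (nat (m - start i))) (length ?u))
      (\<sigma> (x i) @ [1])"
    using window_sublist_window window_block_snoc_1[OF \<open>x \<in> X\<close>] by metis
  then have "sublist ?u (\<sigma> (x i) @ [1])" using u i(1) by simp
  then show "(a, b) \<in> block_ext \<sigma> w"
    using letter_in_A3[OF \<open>x \<in> X\<close>] by (auto simp: block_ext_def factor_pairs_def)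
qed

lemma block_ext_subset_ext_pairs: "block_ext \<sigma> w \<subseteq> ext_pairs Y w"
proof clarify
  fix a b
  let ?u = "a # w @ [b]"
  assume "(a, b) \<in> block_ext \<sigma> w"
  then obtain c where "c \<in> A3" and sub: "sublist ?u (\<sigma> c @ [1])"
    by (auto simp: block_ext_def factor_pairs_def)
  then obtain x n where "x \<in> X" and "x n = c"
    using shift_space by (auto simp: shift_space_def)
  with sub window_block_snoc_1 have "sublist ?u (window (mor_seq \<sigma> x) (cum \<sigma> x n) (Suc (length (\<sigma> c))))"
    by metis
  then obtain j where "?u = window (mor_seq \<sigma> x) j (length ?u)"
    by (rule sublist_window_is_window)
  with \<open>x \<in> X\<close> show "(a, b) \<in> ext_pairs Y w"
    by (auto simp: ext_pairs_def lang_image_shift)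
qed

lemma ext_pairs_eq_block_ext: "1 \<notin> set w \<Longrightarrow> ext_pairs Y w = block_ext \<sigma> w"
  using ext_pairs_subset_block_ext block_ext_subset_ext_pairs by blast

lemma window_between_ones:
  assumes "x \<in> X" and "mor_seq \<sigma> x a = 1" and "mor_seq \<sigma> x b = 1" and "a \<le> b"
  obtains i n where "a = cum \<sigma> x i" and "b = cum \<sigma> x (i + int n)"
    and "window (mor_seq \<sigma> x) a (nat (b - a)) = mor_word \<sigma> (window x i n)"
proof -
  interpret block_decomposition \<sigma> x using assms(1) by (rule block_decomposition_X)
  obtain i j where a: "a = start i" and b: "b = start j"
    using assms(2,3) mor_seq_eq_1_iff[OF assms(1)] by metis
  with \<open>a \<le> b\<close> obtain n where "j = i + int n" by (metis start_le_iff zle_iff_zadd)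
  with a b show thesis using that window_blocks by blast
qed

lemma extended_image_exists:
  assumes "u \<in> lang Y" and "1 \<in> set u"
  shows "\<exists>v\<in>lang X. ext_image X \<sigma> v u"
proof -
  obtain x m where "x \<in> X" and "u = window (mor_seq \<sigma> x) m (length u)"
    using assms(1) lang_image_shift by blast
  let ?f = "mor_seq \<sigma> x"
  define L where "L = length u"
  have u: "u = window ?f m L" using \<open>u = _\<close> by (simp add: L_def)
  obtain s r where "u = s @ 1 # r" and "1 \<notin> set s"
    using split_list_first[OF assms(2)] by blast
  moreover obtain mid p where "1 # r = mid @ 1 # p" and "1 \<notin> set p"
    using split_list_last[of 1 "1 # r"] by auto
  ultimately have u_split: "u = s @ mid @ 1 # p" by simp
  define F G where "F = m + int (length s)" and "G = F + int (length mid)"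
  have "L = length s + (length mid + Suc (length p))" by (simp add: L_def u_split)
  then have "u = window ?f m (length s) @ window ?f F (length mid) @ window ?f G (Suc (length p))"
    unfolding u by (simp only: window_add F_def G_def)
  then have s: "s = window ?f m (length s)" and mid: "mid = window ?f F (nat (G - F))"
    and p: "1 # p = window ?f G (Suc (length p))"
    using u_split by (simp_all add: G_def)
  have "u ! length s = 1" and "length s < L"
    using \<open>u = s @ 1 # r\<close> by (simp_all add: L_def)
  then have "?f F = 1" unfolding u F_def by simp
  moreover have "?f G = 1" using p by (simp add: window_Suc)
  ultimately obtain i n where F: "F = cum \<sigma> x i" and G: "G = cum \<sigma> x (i + int n)"
    and "mid = mor_word \<sigma> (window x i n)"
    using window_between_ones[OF \<open>x \<in> X\<close>] mid by (metis G_def le_add_same_cancel1 of_nat_0_le_iff)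
  moreover have "strict_suffix s (\<sigma> (x (i - 1)))"
    using strict_suffix_block_if_window_before_start[OF \<open>x \<in> X\<close>] s \<open>1 \<notin> set s\<close> F
    by (metis F_def)
  moreover have "prefix (1 # p) (\<sigma> (x (i + int n)))"
    using prefix_block_if_window_from_start[OF \<open>x \<in> X\<close>] p \<open>1 \<notin> set p\<close> G
    by (metis window_Suc list.inject)
  moreover have "[x (i - 1)] @ window x i n @ [x (i + int n)] \<in> lang X"
    using window_in_lang[OF \<open>x \<in> X\<close>, of "i - 1" "Suc (Suc n)"] by (simp add: window_Suc_Suc)
  ultimately have "ext_image X \<sigma> (window x i n) u"
    unfolding ext_image_def using assms(1) u_split by blast
  moreover have "window x i n \<in> lang X"
    using window_in_lang[OF \<open>x \<in> X\<close>] .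
  ultimately show ?thesis by blast
qed

end

lemma sublist_strip_ends:
  assumes "sublist w (x # t @ [y])" and "x \<notin> set w" and "y \<notin> set w"
  shows "sublist w t"
proof (cases w)
  case (Cons c w')
  with assms(1,2) have "sublist w (t @ [y])" by (auto simp: sublist_Cons_right)
  moreover have "\<not> suffix w (t @ [y])"
  proof
    assume "suffix w (t @ [y])"
    then obtain zs where "w = zs @ [y]" using Cons by (auto simp: suffix_snoc)
    with assms(3) show False by simp
  qed
  ultimately show ?thesis unfolding sublist_snoc by blast
qed simp

lemma sublist_replicate_eq: "sublist w (replicate m z) \<Longrightarrow> w = replicate (length w) z"
  using set_mono_sublist[of w "replicate m z"] by (intro replicate_eqI) auto

lemma sublist_Cons_replicate_cases:
  assumes "sublist w (y # replicate m z)"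
  obtains "w = []" | w' where "w = y # w'" | j where "1 \<le> j" and "w = replicate j z"
proof -
  from assms have "prefix w (y # replicate m z) \<or> sublist w (replicate m z)"
    by (simp add: sublist_Cons_right)
  then show thesis
  proof
    assume "prefix w (y # replicate m z)"
    then show thesis using that(1,2) by (cases w) auto
  next
    assume "sublist w (replicate m z)"
    then have "w = replicate (length w) z" by (rule sublist_replicate_eq)
    then show thesis using that(1) that(3)[of "length w"] by (cases w) auto
  qed
qed

lemma factor_pairs_Cons:
  "factor_pairs w (x # u) = {(a, b). prefix (a # w @ [b]) (x # u)} \<union> factor_pairs w u"
  by (auto simp: factor_pairs_def sublist_Cons_right)

lemma factor_pairs_eq_empty: "\<not> set w \<subseteq> set u \<Longrightarrow> factor_pairs w u = {}"
  unfolding factor_pairs_def using set_mono_sublist by fastforce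

lemma Domain_factor_pairs_unique_letter:
  assumes "y \<notin> set rest"
  shows "Domain (factor_pairs (y # w) (x # y # rest)) \<subseteq> {x}"
proof -
  have "\<not> sublist (a # y # w @ [b]) (y # rest)" for a b
    using assms by (auto simp: sublist_Cons_right dest: set_mono_sublist set_mono_prefix)
  then show ?thesis by (auto simp: factor_pairs_def sublist_Cons_right)
qed

lemma prefix_replicate_snoc_iff:
  assumes "y \<noteq> z"
  shows "prefix (replicate j z @ [b]) (replicate m z @ [y]) \<longleftrightarrow> j = m \<and> b = y \<or> j < m \<and> b = z"
  using assms
proof (induction j arbitrary: m)
  case 0
  then show ?case by (cases m) auto
next
  case (Suc j)
  then show ?case by (cases m) auto
qed

lemma sublist_replicate_snoc_iff:
  assumes "y \<noteq> z"
  shows "sublist (a # replicate j z @ [b]) (replicate m z @ [y]) \<longleftrightarrow>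
    a = z \<and> (j < m \<and> b = y \<or> Suc j < m \<and> b = z)"
proof (induction m)
  case 0
  then show ?case by (auto simp: sublist_Cons_right)
next
  case (Suc m)
  then show ?case
    using prefix_replicate_snoc_iff[OF assms, of j b m] by (auto simp: sublist_Cons_right)
qed

lemma factor_pairs_Cons_replicate_snoc:
  assumes "y \<noteq> z"
  shows "factor_pairs (replicate j z) (x # replicate m z @ [y]) =
    (if j = m then {(x, y)} else {}) \<union> (if j < m then {(x, z), (z, y)} else {}) \<union>
    (if Suc j < m then {(z, z)} else {})"
  using prefix_replicate_snoc_iff[OF assms, of j _ m] sublist_replicate_snoc_iff[OF assms, of _ j _ m]
  by (auto simp: factor_pairs_def sublist_Cons_right)

definition dendric_inside_blocks :: "morph \<Rightarrow> bool" where
  "dendric_inside_blocks \<sigma> \<longleftrightarrow> (\<forall>w. 1 \<notin> set w \<longrightarrow> 2 \<le> card (Domain (block_ext \<sigma> w)) \<longrightarrow>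
     2 \<le> card (Range (block_ext \<sigma> w)) \<longrightarrow> bip_tree (block_ext \<sigma> w))"

lemma dendric_inside_blocksI:
  assumes "\<sigma> \<in> S3"
    and "\<And>w. 1 \<notin> set w \<Longrightarrow> (\<exists>c\<in>A3. sublist w (tl (\<sigma> c))) \<Longrightarrow>
      2 \<le> card (Domain (block_ext \<sigma> w)) \<Longrightarrow> 2 \<le> card (Range (block_ext \<sigma> w)) \<Longrightarrow>
      bip_tree (block_ext \<sigma> w)"
  shows "dendric_inside_blocks \<sigma>"
  unfolding dendric_inside_blocks_def
proof (intro allI impI)
  fix w :: "nat list"
  assume "1 \<notin> set w" and bisp: "2 \<le> card (Domain (block_ext \<sigma> w))" "2 \<le> card (Range (block_ext \<sigma> w))"
  then have "Domain (block_ext \<sigma> w) \<noteq> {}" by auto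
  then obtain a b where "(a, b) \<in> block_ext \<sigma> w" by auto
  then obtain c where "c \<in> A3" and sub: "sublist (a # w @ [b]) (\<sigma> c @ [1])"
    by (auto simp: block_ext_def factor_pairs_def)
  obtain t where t: "\<sigma> c = 1 # t" using S3_eq_Cons_1[OF assms(1) \<open>c \<in> A3\<close>] by blast
  have "sublist w (\<sigma> c @ [1])"
    using sub by (metis append_Cons append_Nil sublist_appendI sublist_order.order_trans)
  then have "sublist w (tl (\<sigma> c))"
    using sublist_strip_ends[of w 1 t 1] \<open>1 \<notin> set w\<close> t by simp
  with \<open>c \<in> A3\<close> show "bip_tree (block_ext \<sigma> w)"
    using assms(2) \<open>1 \<notin> set w\<close> bisp by blast
qed

lemma alpha_beta_gamma_eta_in_S3 [simp]: "mor_alpha \<in> S3" "mor_beta \<in> S3" "mor_gamma \<in> S3" "mor_eta \<in> S3"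
  by (simp_all add: S3_def)

text \<open>
  In the explicit extension sets below each pair is a leaf of the bipartite graph spanned by the
  pairs listed after it; this is the order in which \<open>bip_tree_insert_leaf\<close> builds the trees.
\<close>

lemma block_ext_alpha:
  "block_ext mor_alpha [] = {(1, 2), (1, 3), (2, 1), (3, 1), (1, 1)}"
  "block_ext mor_alpha [2] = {(1, 1)}"
  "block_ext mor_alpha [3] = {(1, 1)}"
  by (auto simp: block_ext_def factor_pairs_def A3_def mor_alpha_def sublist_code)

lemma dendric_inside_blocks_alpha: "dendric_inside_blocks mor_alpha"
proof (rule dendric_inside_blocksI)
  fix w :: "nat list"
  assume "1 \<notin> set w" and "\<exists>c\<in>A3. sublist w (tl (mor_alpha c))"
    and "2 \<le> card (Domain (block_ext mor_alpha w))" "2 \<le> card (Range (block_ext mor_alpha w))"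
  moreover have "bip_tree (block_ext mor_alpha [])"
    unfolding block_ext_alpha by (intro bip_tree_singleton bip_tree_insert_leaf) auto
  moreover from \<open>\<exists>c\<in>A3. _\<close> have "w \<in> {[], [2], [3]}"
    by (auto simp: A3_def mor_alpha_def sublist_Cons_right prefix_Cons)
  ultimately show "bip_tree (block_ext mor_alpha w)" by (auto simp: block_ext_alpha)
qed simp

lemma block_ext_beta:
  "block_ext mor_beta [] = {(1, 3), (2, 1), (3, 2), (1, 1), (1, 2)}"
  "block_ext mor_beta [2] = {(1, 1), (3, 1)}"
  "block_ext mor_beta [3] = {(1, 2)}"
  "block_ext mor_beta [3, 2] = {(1, 1)}"
  by (auto simp: block_ext_def factor_pairs_def A3_def mor_beta_def sublist_code)

lemma dendric_inside_blocks_beta: "dendric_inside_blocks mor_beta"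
proof (rule dendric_inside_blocksI)
  fix w :: "nat list"
  assume "1 \<notin> set w" and "\<exists>c\<in>A3. sublist w (tl (mor_beta c))"
    and "2 \<le> card (Domain (block_ext mor_beta w))" "2 \<le> card (Range (block_ext mor_beta w))"
  moreover have "bip_tree (block_ext mor_beta [])"
    unfolding block_ext_beta by (intro bip_tree_singleton bip_tree_insert_leaf) auto
  moreover from \<open>\<exists>c\<in>A3. _\<close> have "w \<in> {[], [2], [3], [3, 2]}"
    by (auto simp: A3_def mor_beta_def sublist_Cons_right prefix_Cons)
  ultimately show "bip_tree (block_ext mor_beta w)" by (auto simp: block_ext_beta)
qed simp

lemma block_ext_gamma:
  "block_ext mor_gamma [] = {(1, 2), (2, 3), (1, 1), (2, 1), (3, 1)}"
  "block_ext mor_gamma [2] = {(1, 1), (1, 3)}"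
  "block_ext mor_gamma [3] = {(2, 1)}"
  "block_ext mor_gamma [2, 3] = {(1, 1)}"
  by (auto simp: block_ext_def factor_pairs_def A3_def mor_gamma_def sublist_code)

lemma dendric_inside_blocks_gamma: "dendric_inside_blocks mor_gamma"
proof (rule dendric_inside_blocksI)
  fix w :: "nat list"
  assume "1 \<notin> set w" and "\<exists>c\<in>A3. sublist w (tl (mor_gamma c))"
    and "2 \<le> card (Domain (block_ext mor_gamma w))" "2 \<le> card (Range (block_ext mor_gamma w))"
  moreover have "bip_tree (block_ext mor_gamma [])"
    unfolding block_ext_gamma by (intro bip_tree_singleton bip_tree_insert_leaf) auto
  moreover from \<open>\<exists>c\<in>A3. _\<close> have "w \<in> {[], [2], [3], [2, 3]}"
    by (auto simp: A3_def mor_gamma_def sublist_Cons_right prefix_Cons)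
  ultimately show "bip_tree (block_ext mor_gamma w)" by (auto simp: block_ext_gamma)
qed simp

lemma block_ext_eta:
  "block_ext mor_eta [] = {(1, 2), (3, 1), (1, 3), (2, 1), (2, 3)}"
  "block_ext mor_eta [2] = {(1, 1), (1, 3)}"
  "block_ext mor_eta [3] = {(1, 1), (2, 1)}"
  "block_ext mor_eta [2, 3] = {(1, 1)}"
  by (auto simp: block_ext_def factor_pairs_def A3_def mor_eta_def sublist_code)

lemma dendric_inside_blocks_eta: "dendric_inside_blocks mor_eta"
proof (rule dendric_inside_blocksI)
  fix w :: "nat list"
  assume "1 \<notin> set w" and "\<exists>c\<in>A3. sublist w (tl (mor_eta c))"
    and "2 \<le> card (Domain (block_ext mor_eta w))" "2 \<le> card (Range (block_ext mor_eta w))"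
  moreover have "bip_tree (block_ext mor_eta [])"
    unfolding block_ext_eta by (intro bip_tree_singleton bip_tree_insert_leaf) auto
  moreover from \<open>\<exists>c\<in>A3. _\<close> have "w \<in> {[], [2], [3], [2, 3]}"
    by (auto simp: A3_def mor_eta_def sublist_Cons_right prefix_Cons)
  ultimately show "bip_tree (block_ext mor_eta w)" by (auto simp: block_ext_eta)
qed simp

lemma bip_tree_factor_pairs_replicate:
  assumes "x \<noteq> z" and "y \<noteq> z"
    and R: "R = factor_pairs (replicate j z) (x # replicate k z @ [y]) \<union>
      factor_pairs (replicate j z) (x # replicate (Suc k) z @ [y])"
    and "2 \<le> card (Domain R)"
  shows "bip_tree R"
proof -
  consider "j < k" | "j = k" | "k < j" by linarith
  then show ?thesis
  proof cases
    case 1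
    then have "R = {(x, z), (z, y), (z, z)}"
      using assms(2) by (auto simp: R factor_pairs_Cons_replicate_snoc simp del: replicate_Suc)
    then show ?thesis
      using assms(1,2) by simp (intro bip_tree_singleton bip_tree_insert_leaf; auto)
  next
    case 2
    then have "R = {(z, y), (x, z), (x, y)}"
      using assms(2) by (auto simp: R factor_pairs_Cons_replicate_snoc simp del: replicate_Suc)
    then show ?thesis
      using assms(1,2) by simp (intro bip_tree_singleton bip_tree_insert_leaf; auto)
  next
    case 3
    then have "Domain R \<subseteq> {x}"
      using assms(2) by (auto simp: R factor_pairs_Cons_replicate_snoc simp del: replicate_Suc)
    then have "card (Domain R) \<le> card {x}" by (rule card_mono[rotated]) simp
    with assms(4) show ?thesis by simp
  qed
qed

lemma block_ext_delta:
  "block_ext (mor_delta k) w = factor_pairs w [1, 1] \<union>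
    (factor_pairs w (1 # 2 # replicate k 3 @ [1]) \<union> factor_pairs w (1 # 2 # replicate (Suc k) 3 @ [1]))"
  by (simp add: block_ext_def A3_def mor_delta_def)

lemma dendric_inside_blocks_delta:
  assumes "1 \<le> k"
  shows "dendric_inside_blocks (mor_delta k)"
proof (rule dendric_inside_blocksI)
  show "mor_delta k \<in> S3" using assms by (auto simp: S3_def)
next
  fix w :: "nat list"
  let ?R = "block_ext (mor_delta k) w"
  assume "1 \<notin> set w" and tail: "\<exists>c\<in>A3. sublist w (tl (mor_delta k c))"
    and bisp: "2 \<le> card (Domain ?R)" "2 \<le> card (Range ?R)"
  from tail obtain c where "c \<in> A3" and "sublist w (tl (mor_delta k c))" by blast
  moreover have "prefix (replicate k 3) (3 # replicate k (3 :: nat))"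
    by (metis prefixI replicate_append_same)
  with \<open>c \<in> A3\<close> have "sublist (tl (mor_delta k c)) (2 # replicate (Suc k) 3)"
    by (auto simp: A3_def mor_delta_def sublist_Cons_right)
  ultimately have "sublist w (2 # replicate (Suc k) 3)" by (metis sublist_order.order_trans)
  then show "bip_tree ?R"
  proof (cases rule: sublist_Cons_replicate_cases)
    case 1
    have "factor_pairs [] [1, 1] = {(1, 1 :: nat)}" by (auto simp: factor_pairs_def sublist_code)
    moreover have "factor_pairs [] (1 # 2 # u) = insert (1, 2) (factor_pairs [] (2 # u))"
      for u :: "nat list"
      by (auto simp: factor_pairs_Cons)
    ultimately have "?R = {(1, 2), (2, 3), (1, 1), (3, 1), (3, 3)}"
      using 1 assms factor_pairs_Cons_replicate_snoc[of "1 :: nat" 3 0 2]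
      by (auto simp: block_ext_delta simp del: replicate_Suc)
    then show ?thesis by simp (intro bip_tree_singleton bip_tree_insert_leaf; auto)
  next
    case (2 w')
    have "Domain (factor_pairs (2 # w') (1 # 2 # replicate n 3 @ [1])) \<subseteq> {1}" for n
      by (rule Domain_factor_pairs_unique_letter) simp
    then have "Domain ?R \<subseteq> {1}"
      unfolding block_ext_delta 2 Domain_Un_eq
      by (simp add: factor_pairs_eq_empty del: replicate_Suc)
    then have "card (Domain ?R) \<le> card {1 :: nat}" by (rule card_mono[rotated]) simp
    with bisp show ?thesis by simp
  next
    case (3 j)
    have skip_1: "factor_pairs (replicate j 3) (1 # 2 # u) = factor_pairs (replicate j 3) (2 # u)"
      for u :: "nat list"
      using \<open>1 \<le> j\<close> by (cases j) (auto simp: factor_pairs_Cons)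
    from 3 have "?R = factor_pairs (replicate j 3) (2 # replicate k 3 @ [1]) \<union>
        factor_pairs (replicate j 3) (2 # replicate (Suc k) 3 @ [1])"
      by (simp only: block_ext_delta skip_1) (simp add: factor_pairs_eq_empty del: replicate_Suc)
    then show ?thesis using bisp(1) by (rule bip_tree_factor_pairs_replicate[rotated 2]) simp_all
  qed
qed

lemma block_ext_zeta:
  "block_ext (mor_zeta k) w = factor_pairs w (1 # replicate k 3 @ [1]) \<union>
    (factor_pairs w [1, 2, 1] \<union> factor_pairs w (1 # replicate (Suc k) 3 @ [1]))"
  by (simp add: block_ext_def A3_def mor_zeta_def)

lemma dendric_inside_blocks_zeta:
  assumes "1 \<le> k"
  shows "dendric_inside_blocks (mor_zeta k)"
proof (rule dendric_inside_blocksI)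
  show "mor_zeta k \<in> S3" using assms by (auto simp: S3_def)
next
  fix w :: "nat list"
  let ?R = "block_ext (mor_zeta k) w"
  assume "1 \<notin> set w" and tail: "\<exists>c\<in>A3. sublist w (tl (mor_zeta k c))"
    and bisp: "2 \<le> card (Domain ?R)" "2 \<le> card (Range ?R)"
  from tail obtain c where "c \<in> A3" and "sublist w (tl (mor_zeta k c))" by blast
  moreover have "prefix (replicate k 3) (3 # replicate k (3 :: nat))"
    by (metis prefixI replicate_append_same)
  with \<open>c \<in> A3\<close> have "sublist (tl (mor_zeta k c)) (2 # replicate (Suc k) 3)"
    by (auto simp: A3_def mor_zeta_def sublist_Cons_right)
  ultimately have "sublist w (2 # replicate (Suc k) 3)" by (metis sublist_order.order_trans)
  then show "bip_tree ?R"
  proof (cases rule: sublist_Cons_replicate_cases)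
    case 1
    have "factor_pairs [] [1, 2, 1] = {(1, 2), (2, 1 :: nat)}"
      by (auto simp: factor_pairs_def sublist_code)
    then have "?R = {(1, 2), (2, 1), (1, 3), (3, 1), (3, 3)}"
      using 1 assms factor_pairs_Cons_replicate_snoc[of "1 :: nat" 3 0 1]
      by (auto simp: block_ext_zeta simp del: replicate_Suc)
    then show ?thesis by simp (intro bip_tree_singleton bip_tree_insert_leaf; auto)
  next
    case (2 w')
    have "Domain (factor_pairs (2 # w') [1, 2, 1]) \<subseteq> {1}"
      by (rule Domain_factor_pairs_unique_letter) simp
    then have "Domain ?R \<subseteq> {1}"
      unfolding block_ext_zeta 2 Domain_Un_eq
      by (simp add: factor_pairs_eq_empty del: replicate_Suc)
    then have "card (Domain ?R) \<le> card {1 :: nat}" by (rule card_mono[rotated]) simp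
    with bisp show ?thesis by simp
  next
    case (3 j)
    then have "?R = factor_pairs (replicate j 3) (1 # replicate k 3 @ [1]) \<union>
        factor_pairs (replicate j 3) (1 # replicate (Suc k) 3 @ [1])"
      by (simp only: block_ext_zeta) (simp add: factor_pairs_eq_empty del: replicate_Suc)
    then show ?thesis using bisp(1) by (rule bip_tree_factor_pairs_replicate[rotated 2]) simp_all
  qed
qed

lemma dendric_inside_blocks_S3: "\<sigma> \<in> S3 \<Longrightarrow> dendric_inside_blocks \<sigma>"
  unfolding S3_def
  using dendric_inside_blocks_alpha dendric_inside_blocks_beta dendric_inside_blocks_gamma
    dendric_inside_blocks_eta dendric_inside_blocks_delta dendric_inside_blocks_zeta
  by auto

context S3_image
begin

lemma dendric_image_if_DP:
  assumes "\<sigma> \<in> DP X"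
  shows "dendric Y"
  unfolding dendric_def
proof
  fix w assume "w \<in> lang Y"
  let ?R = "ext_pairs Y w"
  have tree_iff: "dendric_word Y w \<longleftrightarrow> bip_tree ?R"
    using \<open>w \<in> lang Y\<close> by (rule dendric_word_iff_bip_tree)
  show "dendric_word Y w"
  proof (cases "bispecial Y w")
    case False
    obtain a b where "[a] @ w @ [b] \<in> lang Y"
      using \<open>w \<in> lang Y\<close> by (rule lang_extend_both)
    then have "?R \<noteq> {}" by (auto simp: ext_pairs_def)
    moreover have "card (Domain ?R) < 2 \<or> card (Range ?R) < 2"
      using False \<open>w \<in> lang Y\<close> by (auto simp: bispecial_iff_card_ext_pairs)
    ultimately show ?thesis
      using bip_tree_if_not_bispecial finite_ext_pairs tree_iff by blast
  next
    case bisp: True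
    show ?thesis
    proof (cases "1 \<in> set w")
      case True
      then obtain v where "v \<in> lang X" and "ext_image X \<sigma> v w"
        using extended_image_exists \<open>w \<in> lang Y\<close> by blast
      with assms bisp show ?thesis by (auto simp: DP_def)
    next
      case False
      then have "?R = block_ext \<sigma> w" by (rule ext_pairs_eq_block_ext)
      with bisp False dendric_inside_blocks_S3[OF S3] show ?thesis
        by (simp add: dendric_inside_blocks_def bispecial_iff_card_ext_pairs tree_iff)
    qed
  qed
qed

end

theorem lemma5p5:
  fixes X :: "(int \<Rightarrow> nat) set" and \<sigma> :: morph
  assumes "shift_space A3 X" and "dendric X" and "\<sigma> \<in> S3"
  shows "dendric (image_shift \<sigma> X) \<longleftrightarrow> \<sigma> \<in> DP X"
proof
  assume "dendric (image_shift \<sigma> X)"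
  with assms(3) show "\<sigma> \<in> DP X"
    unfolding DP_def dendric_def ext_image_def by blast
next
  assume "\<sigma> \<in> DP X"
  interpret S3_image X \<sigma> using assms(1,3) by unfold_locales
  show "dendric (image_shift \<sigma> X)" using \<open>\<sigma> \<in> DP X\<close> by (rule dendric_image_if_DP)
qed

end
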